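(* Let $k$ be a positive integer and suppose $\frac{k}{k+1}<p\le\frac{k+1}{k+2}<t\le 1$. Then bold play is optimal, i.e. $\pi(p,t)=p$ (attained by $c_1=1$, $c_i=0$ for $i\ge 2$).
   Context: Let $\beta_1,\beta_2,\ldots$ be independent Bernoulli random variables with success probability $p$. A stake sequence is a sequence $\gamma=(c_1,c_2,\ldots)$ of non-negative reals with $c_1\ge c_2\ge\cdots$ and $\sum_i c_i=1$; write $S_\gamma=\sum_i c_i\beta_i$. For $0\le p\le t\le 1$ define $\pi(p,t)=\sup\{\mathbf P(S_\gamma\ge t)\mid \gamma \text{ a stake sequence}\}$. Bold play for threshold $t$ is the stake sequence with $c_i=\frac1m$ for $i\le m$ and $c_i=0$ for $i>m$, where $m=\lfloor 1/t\rfloor$; bold play is optimal if it attains $\pi(p,t)$. For $t>\frac12$ bold play is $c_1=1$, with success probability $p$. *)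

theory Defs
  imports "HOL-Probability.Probability"
begin

text \<open>Probability space of the i.i.d. Bernoulli(p) sequence beta_1, beta_2, ...
  (indexed from 0 here): the infinite product of Bernoulli measures on nat => bool.\<close>
definition bern_space :: "real \<Rightarrow> (nat \<Rightarrow> bool) measure" where
  "bern_space p = (\<Pi>\<^sub>M i\<in>(UNIV::nat set). measure_pmf (bernoulli_pmf p))"

text \<open>Stake sequence: non-negative, non-increasing, summing to 1 (index shifted to start at 0).\<close>
definition stake_seq :: "(nat \<Rightarrow> real) \<Rightarrow> bool" where
  "stake_seq c \<longleftrightarrow> (\<forall>i. 0 \<le> c i) \<and> (\<forall>i. c (Suc i) \<le> c i) \<and> c sums 1"

definition stake_sum :: "(nat \<Rightarrow> real) \<Rightarrow> (nat \<Rightarrow> bool) \<Rightarrow> real" where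
  "stake_sum c \<omega> = (\<Sum>i. c i * (if \<omega> i then 1 else 0))"

definition success_prob :: "real \<Rightarrow> (nat \<Rightarrow> real) \<Rightarrow> real \<Rightarrow> real" where
  "success_prob p c t = measure (bern_space p) {\<omega> \<in> space (bern_space p). stake_sum c \<omega> \<ge> t}"

definition opt_prob :: "real \<Rightarrow> real \<Rightarrow> real" where
  "opt_prob p t = (SUP c\<in>{c. stake_seq c}. success_prob p c t)"

definition bold_play :: "real \<Rightarrow> nat \<Rightarrow> real" where
  "bold_play t i = (let m = nat \<lfloor>1 / t\<rfloor> in if i < m then 1 / real m else 0)"

end

theory Submission
  imports Defs
begin

text \<open>
  Put r = k + 2, q = 1 - p and s = 1 - t, so that 1/r \<le> q < 1/(r - 1) and r s < 1.
  If the gambler reaches t, the stakes lost among the first n rounds weigh at most s.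
  Choosing n with c_1 + ... + c_n > r s, it therefore suffices that a random subset of
  {..<n}, containing each index independently with probability q, is light (weight at
  most s) with probability at most 1 - q.

  For q = a/N with (r - 1) a < N \<le> r a this is a double count: place the n indices
  uniformly at random on \<int>/N and let the random subset consist of the indices falling
  into a randomly rotated window of length a. For every placement at least a of the N
  rotations give a heavy window. Indeed, if the r - 1 consecutive windows starting at
  \<theta> are all light, the rest of the circle carries weight more than s, so every window
  covering that rest is heavy; a Cauchy-Davenport type count turns this into at least a
  heavy rotations. A general q follows by continuity, the probability being a polynomial
  in q.
\<close>

lemma inj_on_add_mod:
  fixes N b :: int
  shows "inj_on (\<lambda>\<theta>. (\<theta> + b) mod N) {0..<N}"
proof (rule inj_onI)
  fix x y assume xy: "x \<in> {0..<N}" "y \<in> {0..<N}" "(x + b) mod N = (y + b) mod N"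
  hence "(x + b - b) mod N = (y + b - b) mod N" by (metis mod_diff_left_eq)
  thus "x = y" using xy(1,2) by simp
qed

lemma mod_succ_closed_eq_atLeastLessThan:
  fixes N y0 :: int and Y :: "int set"
  assumes N: "N > 0" and Y: "Y \<subseteq> {0..<N}" and y0: "y0 \<in> Y"
    and closed: "\<And>y. y \<in> Y \<Longrightarrow> (y + 1) mod N \<in> Y"
  shows "Y = {0..<N}"
proof
  have orbit: "(y0 + int m) mod N \<in> Y" for m :: nat
  proof (induction m)
    case 0
    then show ?case using Y y0 by auto
  next
    case (Suc m)
    have "(y0 + int (Suc m)) mod N = ((y0 + int m) mod N + 1) mod N"
      by (simp add: mod_add_right_eq ac_simps)
    then show ?case using closed[OF Suc] by simp
  qed
  show "{0..<N} \<subseteq> Y"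
  proof
    fix z assume z: "z \<in> {0..<N}"
    have "(y0 + int (nat ((z - y0) mod N))) mod N = (y0 + (z - y0)) mod N"
      using N by (simp add: mod_add_right_eq)
    also have "\<dots> = z" using z by simp
    finally show "z \<in> Y" using orbit by metis
  qed
qed (use Y in auto)

lemma card_sumset_atMost_mod:
  fixes N :: int and X :: "int set" and L :: nat
  assumes N: "N > 0" and X: "X \<subseteq> {0..<N}" "X \<noteq> {}"
  shows "min N (int (card X) + int L) \<le> int (card {(x + int l) mod N |x l. x \<in> X \<and> l \<le> L})"
proof (induction L)
  case 0
  have "{(x + int l) mod N |x l. x \<in> X \<and> l \<le> 0} = X" using X(1) by force
  then show ?case by simp
next
  case (Suc L)
  define S where "S L = {(x + int l) mod N |x l. x \<in> X \<and> l \<le> L}" for L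
  have S_sub: "S L \<subseteq> {0..<N}" for L unfolding S_def using N by auto
  have fin: "finite (S L)" for L using S_sub finite_subset by blast
  have mono: "S L \<subseteq> S (Suc L)" unfolding S_def by fastforce
  have succ: "(y + 1) mod N \<in> S (Suc L)" if "y \<in> S L" for y
  proof -
    obtain x l where "x \<in> X" "l \<le> L" "y = (x + int l) mod N"
      using \<open>y \<in> S L\<close> unfolding S_def by blast
    moreover have "((x + int l) mod N + 1) mod N = (x + int (Suc l)) mod N"
      by (simp add: mod_add_right_eq ac_simps)
    ultimately show ?thesis unfolding S_def by force
  qed
  show ?case
  proof (cases "S L = {0..<N}")
    case True
    then have "S (Suc L) = {0..<N}" using mono S_sub by blast
    then show ?thesis using N unfolding S_def by simp
  next
    case False
    moreover have "S L \<noteq> {}" using X(2) unfolding S_def by fastforce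
    ultimately obtain y where "y \<in> S L" "(y + 1) mod N \<notin> S L"
      using mod_succ_closed_eq_atLeastLessThan[OF N S_sub] by blast
    then have "S L \<subset> S (Suc L)" using mono succ by blast
    then have "card (S L) < card (S (Suc L))" using fin by (intro psubset_card_mono)
    then show ?thesis using Suc.IH unfolding S_def by simp
  qed
qed

lemma card_missing_translates_ge:
  fixes N :: int and G :: "int set" and b :: "nat \<Rightarrow> int" and m :: nat
  assumes G: "G \<subseteq> {0..<N}"
  shows "N \<le> int (card {\<theta>\<in>{0..<N}. \<forall>j<m. (\<theta> + b j) mod N \<notin> G}) + int m * int (card G)"
proof -
  define B where "B j = {\<theta>\<in>{0..<N}. (\<theta> + b j) mod N \<in> G}" for j
  define D where "D = {\<theta>\<in>{0..<N}. \<forall>j<m. (\<theta> + b j) mod N \<notin> G}"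
  have "card (B j) \<le> card G" for j
  proof (rule card_inj_on_le)
    show "inj_on (\<lambda>\<theta>. (\<theta> + b j) mod N) (B j)"
      using inj_on_add_mod by (rule inj_on_subset) (auto simp: B_def)
  qed (use G finite_subset in \<open>auto simp: B_def\<close>)
  then have "card (\<Union>j<m. B j) \<le> m * card G"
    using card_UN_le[of "{..<m}" B] sum_bounded_above[of "{..<m}" "\<lambda>j. card (B j)" "card G"] by simp
  moreover have "{0..<N} = D \<union> (\<Union>j<m. B j)" unfolding B_def D_def by auto
  then have "card {0..<N} \<le> card D + card (\<Union>j<m. B j)" by (metis card_Un_le)
  ultimately have "card {0..<N} \<le> card D + m * card G" by linarith
  then have "int (card {0..<N}) \<le> int (card D) + int m * int (card G)"
    by (metis of_nat_add of_nat_le_iff of_nat_mult)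
  moreover have "N \<le> int (card {0..<N})" by simp
  ultimately show ?thesis unfolding D_def by linarith
qed

lemma window_length_bounds:
  fixes N a :: int and r :: nat
  assumes N: "N > 0" and r: "2 \<le> r" and a_lt: "int (r - 1) * a < N" and a_ge: "N \<le> int r * a"
  shows "0 < a" and "a < N"
proof -
  show "0 < a" using N a_ge zero_less_mult_iff[of "int r" a] by auto
  then have "a \<le> int (r - 1) * a" using r by simp
  then show "a < N" using a_lt by linarith
qed

lemma card_ge_of_shifted_intervals:
  fixes N b :: int and D G :: "int set" and L :: nat
  assumes N: "N > 0" and D: "D \<subseteq> {0..<N}" "D \<noteq> {}" and G: "G \<subseteq> {0..<N}"
    and intervals: "\<And>\<theta> l. \<theta> \<in> D \<Longrightarrow> l \<le> L \<Longrightarrow> (\<theta> + b + int l) mod N \<in> G"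
  shows "min N (int (card D) + int L) \<le> int (card G)"
proof -
  define X where "X = (\<lambda>\<theta>. (\<theta> + b) mod N) ` D"
  have "card X = card D"
    unfolding X_def using inj_on_add_mod[of b N] D(1) by (intro card_image) (rule inj_on_subset)
  moreover have "min N (int (card X) + int L)
      \<le> int (card {(x + int l) mod N |x l. x \<in> X \<and> l \<le> L})"
    using N D(2) by (intro card_sumset_atMost_mod) (auto simp: X_def)
  moreover have "{(x + int l) mod N |x l. x \<in> X \<and> l \<le> L} \<subseteq> G"
    using intervals by (auto simp: X_def mod_add_left_eq)
  then have "card {(x + int l) mod N |x l. x \<in> X \<and> l \<le> L} \<le> card G"
    using G finite_subset by (blast intro: card_mono)
  ultimately show ?thesis by simp
qed

lemma card_ge_of_missed_translates:
  fixes N a :: int and r :: nat and G :: "int set"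
  assumes N: "N > 0" and r: "2 \<le> r" and G: "G \<subseteq> {0..<N}"
    and a_lt: "int (r - 1) * a < N" and a_ge: "N \<le> int r * a"
    and cover: "\<And>\<theta>. \<theta> \<in> {0..<N} \<Longrightarrow> (\<forall>j<r - 1. (\<theta> + int j * a) mod N \<notin> G) \<Longrightarrow>
                   \<forall>x\<in>{0..int r * a - N}. (\<theta> - a + x) mod N \<in> G"
  shows "a \<le> int (card G)"
proof -
  have "a < N" using window_length_bounds[OF N r a_lt a_ge] by simp
  define D where "D = {\<theta>\<in>{0..<N}. \<forall>j<r - 1. (\<theta> + int j * a) mod N \<notin> G}"
  have D_large: "N \<le> int (card D) + int (r - 1) * int (card G)"
    unfolding D_def by (rule card_missing_translates_ge[OF G])
  show ?thesis
  proof (cases "D = {}")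
    case True
    have "int (r - 1) * a < int (r - 1) * int (card G)"
      using D_large a_lt unfolding True card.empty of_nat_0 add_0_left by linarith
    then show ?thesis by (simp add: mult_less_cancel_left)
  next
    case False
    have "min N (int (card D) + int (nat (int r * a - N))) \<le> int (card G)"
    proof (rule card_ge_of_shifted_intervals[OF N _ False G, where b = "-a"])
      fix \<theta> l assume "\<theta> \<in> D" "l \<le> nat (int r * a - N)"
      then show "(\<theta> + - a + int l) mod N \<in> G" using cover[of \<theta>] a_ge by (auto simp: D_def)
    qed (auto simp: D_def)
    then have "min N (int (card D) + (int r * a - N)) \<le> int (card G)" using a_ge by simp
    then consider "N \<le> int (card G)" | "int (card D) + (int r * a - N) \<le> int (card G)"
      by linarith
    then show ?thesis
    proof cases
      case 1
      then show ?thesis using \<open>a < N\<close> by linarith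
    next
      case 2
      moreover have "int (r - 1) * int (card G) = int r * int (card G) - int (card G)"
        using r by (simp add: of_nat_diff algebra_simps)
      ultimately have "int r * a \<le> int r * int (card G)"
        using D_large by linarith
      then show ?thesis using r by (simp add: mult_le_cancel_left)
    qed
  qed
qed

lemma card_mod_window:
  fixes N a \<theta> :: int
  assumes N: "N > 0" and a: "0 \<le> a" "a \<le> N"
  shows "card {v\<in>{0..<N}. (v - \<theta>) mod N < a} = nat a"
proof -
  have "bij_betw (\<lambda>v. (v - \<theta>) mod N) {v\<in>{0..<N}. (v - \<theta>) mod N < a} {0..<a}"
  proof (rule bij_betw_imageI)
    have "inj_on (\<lambda>v. (v - \<theta>) mod N) {0..<N}" using inj_on_add_mod[of "-\<theta>" N] by simp
    then show "inj_on (\<lambda>v. (v - \<theta>) mod N) {v\<in>{0..<N}. (v - \<theta>) mod N < a}"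
      by (rule inj_on_subset) auto
    show "(\<lambda>v. (v - \<theta>) mod N) ` {v\<in>{0..<N}. (v - \<theta>) mod N < a} = {0..<a}"
    proof (intro equalityI subsetI)
      fix z assume z: "z \<in> {0..<a}"
      then have "((\<theta> + z) mod N - \<theta>) mod N = z" using a by (simp add: mod_diff_left_eq)
      moreover have "(\<theta> + z) mod N \<in> {0..<N}" using N by simp
      ultimately show "z \<in> (\<lambda>v. (v - \<theta>) mod N) ` {v\<in>{0..<N}. (v - \<theta>) mod N < a}"
        using z by (metis (mono_tags, lifting) atLeastLessThan_iff image_eqI mem_Collect_eq)
    qed (use N in auto)
  qed
  then show ?thesis by (simp add: bij_betw_same_card)
qed

definition window_weight :: "int \<Rightarrow> int \<Rightarrow> (nat \<Rightarrow> real) \<Rightarrow> nat \<Rightarrow> (nat \<Rightarrow> int) \<Rightarrow> int \<Rightarrow> real"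
  where "window_weight N a c n U \<theta> = (\<Sum>i<n. if (U i - \<theta>) mod N < a then c i else 0)"

lemma window_weight_mod [simp]:
  "window_weight N a c n U (\<theta> mod N) = window_weight N a c n U \<theta>"
  by (simp add: window_weight_def mod_diff_right_eq)

lemma arc_weight_le_sum_window_weights:
  fixes N a \<theta> :: int and m n :: nat
  assumes N: "N > 0" and a: "a > 0" and c: "\<And>i. 0 \<le> c i"
  shows "(\<Sum>i<n. if (U i - \<theta>) mod N < int m * a then c i else 0)
           \<le> (\<Sum>j<m. window_weight N a c n U (\<theta> + int j * a))"
proof -
  have "(if (U i - \<theta>) mod N < int m * a then c i else 0)
          \<le> (\<Sum>j<m. if (U i - (\<theta> + int j * a)) mod N < a then c i else 0)" for i
  proof (cases "(U i - \<theta>) mod N < int m * a")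
    case True
    define d where "d = (U i - \<theta>) mod N"
    define j where "j = nat (d div a)"
    have d: "0 \<le> d" "d < N" "d < int m * a" using N True by (auto simp: d_def)
    have "int j * a = d - d mod a"
      using d a by (simp add: j_def pos_imp_zdiv_nonneg_iff minus_mod_eq_div_mult)
    then have j: "int j * a \<le> d" "d < int j * a + a"
      using a pos_mod_sign[OF a, of d] pos_mod_bound[OF a, of d] by linarith+
    have "0 \<le> int j * a" using a by simp
    have "int j * a < int m * a" using j d(3) by linarith
    then have "j < m" using a by (simp add: mult_less_cancel_right)
    have "(U i - (\<theta> + int j * a)) mod N = (d - int j * a) mod N"
      by (simp add: d_def mod_diff_left_eq diff_diff_eq)
    also have "\<dots> = d - int j * a"
      using j d \<open>0 \<le> int j * a\<close> by (intro mod_pos_pos_trivial) linarith+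
    finally have "c i = (if (U i - (\<theta> + int j * a)) mod N < a then c i else 0)" using j by simp
    also have "\<dots> \<le> (\<Sum>j<m. if (U i - (\<theta> + int j * a)) mod N < a then c i else 0)"
      using \<open>j < m\<close> c by (intro member_le_sum) auto
    finally show ?thesis using True by simp
  qed (use c in \<open>simp add: sum_nonneg\<close>)
  then have "(\<Sum>i<n. if (U i - \<theta>) mod N < int m * a then c i else 0)
      \<le> (\<Sum>i<n. \<Sum>j<m. if (U i - (\<theta> + int j * a)) mod N < a then c i else 0)"
    by (rule sum_mono)
  also have "\<dots> = (\<Sum>j<m. window_weight N a c n U (\<theta> + int j * a))"
    unfolding window_weight_def by (rule sum.swap)
  finally show ?thesis .
qed

lemma coarc_weight_le_window_weight:
  fixes N a b \<theta> x :: int and n :: nat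
  assumes N: "N > 0" and c: "\<And>i. 0 \<le> c i" and x: "0 \<le> x" "N \<le> b + a - x"
  shows "(\<Sum>i<n. if \<not> (U i - \<theta>) mod N < b then c i else 0) \<le> window_weight N a c n U (\<theta> - a + x)"
  unfolding window_weight_def
proof (rule sum_mono)
  fix i
  define d where "d = (U i - \<theta>) mod N"
  have d: "0 \<le> d" "d < N" using N by (auto simp: d_def)
  have "\<not> d < b \<Longrightarrow> (U i - (\<theta> - a + x)) mod N < a"
  proof -
    assume "\<not> d < b"
    have "(U i - (\<theta> - a + x)) mod N = ((U i - \<theta>) + (a - x)) mod N"
      by (simp add: algebra_simps)
    also have "\<dots> = (d + a - x - N) mod N"
      by (metis d_def mod_add_left_eq mod_add_self2 diff_add_cancel add_diff_eq)
    also have "\<dots> \<le> d + a - x - N" using \<open>\<not> d < b\<close> x by (intro zmod_le_nonneg_dividend) linarith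
    finally show ?thesis using d x by linarith
  qed
  then show "(if \<not> (U i - \<theta>) mod N < b then c i else 0)
      \<le> (if (U i - (\<theta> - a + x)) mod N < a then c i else 0)"
    using c by (simp add: d_def)
qed

lemma card_heavy_windows_ge:
  fixes N a :: int and r n :: nat and s :: real
  assumes N: "N > 0" and r: "2 \<le> r"
    and a_lt: "int (r - 1) * a < N" and a_ge: "N \<le> int r * a"
    and c: "\<And>i. 0 \<le> c i" and total: "real r * s < (\<Sum>i<n. c i)"
  shows "a \<le> int (card {\<theta>\<in>{0..<N}. s < window_weight N a c n U \<theta>})"
proof (rule card_ge_of_missed_translates[OF N r _ a_lt a_ge])
  fix \<theta> assume light: "\<forall>j<r - 1. (\<theta> + int j * a) mod N \<notin> {\<theta>\<in>{0..<N}. s < window_weight N a c n U \<theta>}"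
  have a: "a > 0" using window_length_bounds[OF N r a_lt a_ge] by simp
  let ?arc = "\<lambda>i. if (U i - \<theta>) mod N < int (r - 1) * a then c i else 0"
  let ?coarc = "\<lambda>i. if \<not> (U i - \<theta>) mod N < int (r - 1) * a then c i else 0"
  have "sum ?arc {..<n} \<le> (\<Sum>j<r - 1. window_weight N a c n U (\<theta> + int j * a))"
    by (rule arc_weight_le_sum_window_weights[OF N a c])
  also have "\<dots> \<le> (\<Sum>j<r - 1. s)"
    using light N by (intro sum_mono) (auto simp: not_less)
  finally have "sum ?arc {..<n} \<le> real (r - 1) * s" by simp
  moreover have "sum ?arc {..<n} + sum ?coarc {..<n} = (\<Sum>i<n. c i)"
    by (subst sum.distrib[symmetric]) (rule sum.cong, auto)
  ultimately have heavy_coarc: "s < sum ?coarc {..<n}"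
    using total r by (simp add: of_nat_diff algebra_simps)
  show "\<forall>x\<in>{0..int r * a - N}. (\<theta> - a + x) mod N \<in> {\<theta>\<in>{0..<N}. s < window_weight N a c n U \<theta>}"
  proof
    fix x assume "x \<in> {0..int r * a - N}"
    then have "sum ?coarc {..<n} \<le> window_weight N a c n U (\<theta> - a + x)"
      using r by (intro coarc_weight_le_window_weight[OF N c])
        (auto simp: of_nat_diff algebra_simps)
    then show "(\<theta> - a + x) mod N \<in> {\<theta>\<in>{0..<N}. s < window_weight N a c n U \<theta>}"
      using heavy_coarc N by simp
  qed
qed auto

lemma prod_if_mem_subset:
  fixes x y :: "'a :: comm_monoid_mult"
  assumes "F \<subseteq> {..<n}"
  shows "(\<Prod>i<n. if i \<in> F then x else y) = x ^ card F * y ^ (n - card F)"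
proof -
  have "(\<Prod>i<n. if i \<in> F then x else y) = x ^ card ({..<n} \<inter> F) * y ^ card ({..<n} - F)"
    by (simp add: prod.If_cases Diff_eq)
  also have "\<dots> = x ^ card F * y ^ (n - card F)"
    using assms by (simp add: Int_absorb1 card_Diff_subset finite_subset)
  finally show ?thesis .
qed

definition light_sets :: "(nat \<Rightarrow> real) \<Rightarrow> nat \<Rightarrow> real \<Rightarrow> nat set set"
  where "light_sets c n s = {F. F \<subseteq> {..<n} \<and> sum c F \<le> s}"

definition light_prob :: "real \<Rightarrow> (nat \<Rightarrow> real) \<Rightarrow> nat \<Rightarrow> real \<Rightarrow> real"
  where "light_prob q c n s = (\<Sum>F\<in>light_sets c n s. q ^ card F * (1 - q) ^ (n - card F))"

lemma finite_light_sets: "finite (light_sets c n s)"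
  unfolding light_sets_def by (rule finite_subset[of _ "Pow {..<n}"]) auto

lemma PiE_hit_set_eq:
  assumes W: "W \<subseteq> A" and F: "F \<subseteq> {..<n}"
  shows "{U \<in> PiE {..<n} (\<lambda>_. A). {i\<in>{..<n}. U i \<in> W} = F}
           = PiE {..<n} (\<lambda>i. if i \<in> F then W else A - W)"
proof (intro equalityI subsetI)
  fix U assume "U \<in> {U \<in> PiE {..<n} (\<lambda>_. A). {i\<in>{..<n}. U i \<in> W} = F}"
  then show "U \<in> PiE {..<n} (\<lambda>i. if i \<in> F then W else A - W)" by (auto simp: PiE_iff)
next
  fix U assume "U \<in> PiE {..<n} (\<lambda>i. if i \<in> F then W else A - W)"
  then have U: "\<And>i. i < n \<Longrightarrow> U i \<in> (if i \<in> F then W else A - W)" "U \<in> extensional {..<n}"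
    by (auto simp: PiE_iff)
  have "U i \<in> A" if "i < n" for i using U(1)[OF that] W by (auto split: if_splits)
  then have "U \<in> PiE {..<n} (\<lambda>_. A)" using U(2) by (auto simp: PiE_iff)
  moreover have "{i\<in>{..<n}. U i \<in> W} = F"
    using U(1) F by (auto; metis DiffD2 lessThan_iff subsetD)
  ultimately show "U \<in> {U \<in> PiE {..<n} (\<lambda>_. A). {i\<in>{..<n}. U i \<in> W} = F}" by simp
qed

lemma card_light_window_profiles:
  fixes N a \<theta> :: int and n :: nat
  assumes N: "N > 0" and a: "0 \<le> a" "a \<le> N"
  shows "card {U \<in> PiE {..<n} (\<lambda>_. {0..<N}). window_weight N a c n U \<theta> \<le> s}
           = (\<Sum>F\<in>light_sets c n s. nat a ^ card F * nat (N - a) ^ (n - card F))"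
proof -
  define PU where "PU = PiE {..<n} (\<lambda>_. {0..<N::int})"
  define W where "W = {v\<in>{0..<N}. (v - \<theta>) mod N < a}"
  have W_sub: "W \<subseteq> {0..<N}" unfolding W_def by blast
  define hits where "hits U = {i\<in>{..<n}. U i \<in> W}" for U :: "nat \<Rightarrow> int"
  have weight: "window_weight N a c n U \<theta> = sum c (hits U)" if "U \<in> PU" for U
    using that unfolding window_weight_def hits_def W_def PU_def
    by (subst sum.inter_filter[symmetric]) (auto intro!: sum.cong simp: PiE_iff)
  have profile: "{U \<in> PU. hits U = F} = PiE {..<n} (\<lambda>i. if i \<in> F then W else {0..<N} - W)"
    if "F \<subseteq> {..<n}" for F
    unfolding PU_def hits_def by (rule PiE_hit_set_eq[OF W_sub that])
  have "card W = nat a" unfolding W_def by (rule card_mod_window[OF N a])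
  moreover have "card ({0..<N} - W) = nat N - card W"
    using W_sub by (simp add: card_Diff_subset finite_subset)
  ultimately have card_profile:
      "card {U \<in> PU. hits U = F} = nat a ^ card F * nat (N - a) ^ (n - card F)"
    if "F \<subseteq> {..<n}" for F
    using that a
    by (simp add: profile card_PiE if_distrib prod_if_mem_subset nat_diff_distrib cong: if_cong)
  have "{U \<in> PU. window_weight N a c n U \<theta> \<le> s} = (\<Union>F\<in>light_sets c n s. {U \<in> PU. hits U = F})"
    by (auto simp: weight light_sets_def hits_def)
  moreover have "finite PU" unfolding PU_def by (intro finite_PiE) auto
  ultimately have "card {U \<in> PU. window_weight N a c n U \<theta> \<le> s}
      = (\<Sum>F\<in>light_sets c n s. card {U \<in> PU. hits U = F})"
    by (simp only:) (rule card_UN_disjoint[OF finite_light_sets], auto)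
  also have "\<dots> = (\<Sum>F\<in>light_sets c n s. nat a ^ card F * nat (N - a) ^ (n - card F))"
    by (intro sum.cong) (auto simp: light_sets_def card_profile)
  finally show ?thesis unfolding PU_def .
qed

lemma sum_card_filter_swap:
  assumes "finite A" "finite B"
  shows "(\<Sum>x\<in>A. card {y\<in>B. P x y}) = (\<Sum>y\<in>B. card {x\<in>A. P x y})"
proof -
  have "card {y\<in>B. P x y} = (\<Sum>y\<in>B. of_bool (P x y))" for x
    using assms(2) by (simp add: Int_def conj_commute)
  moreover have "card {x\<in>A. P x y} = (\<Sum>x\<in>A. of_bool (P x y))" for y
    using assms(1) by (simp add: Int_def conj_commute)
  ultimately show ?thesis by (simp add: sum.swap[of _ A])
qed

lemma light_profile_count_le:
  fixes N a :: int and r n :: nat and s :: real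
  assumes N: "N > 0" and r: "2 \<le> r"
    and a_lt: "int (r - 1) * a < N" and a_ge: "N \<le> int r * a"
    and c: "\<And>i. 0 \<le> c i" and total: "real r * s < (\<Sum>i<n. c i)"
  shows "nat N * (\<Sum>F\<in>light_sets c n s. nat a ^ card F * nat (N - a) ^ (n - card F))
           \<le> nat N ^ n * nat (N - a)"
proof -
  have a: "0 \<le> a" "a \<le> N" using window_length_bounds[OF N r a_lt a_ge] by simp_all
  define PU where "PU = PiE {..<n} (\<lambda>_. {0..<N})"
  have "finite PU" unfolding PU_def by (intro finite_PiE) auto
  have light_rotations: "card {\<theta>\<in>{0..<N}. window_weight N a c n U \<theta> \<le> s} \<le> nat (N - a)" for U
  proof -
    have "{\<theta>\<in>{0..<N}. window_weight N a c n U \<theta> \<le> s}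
        = {0..<N} - {\<theta>\<in>{0..<N}. s < window_weight N a c n U \<theta>}" by auto
    also have "card \<dots> = nat N - card {\<theta>\<in>{0..<N}. s < window_weight N a c n U \<theta>}"
      by (subst card_Diff_subset) (auto intro: finite_subset[of _ "{0..<N}"])
    finally show ?thesis
      using card_heavy_windows_ge[OF N r a_lt a_ge c total, of U] by linarith
  qed
  have "nat N * (\<Sum>F\<in>light_sets c n s. nat a ^ card F * nat (N - a) ^ (n - card F))
      = (\<Sum>\<theta>\<in>{0..<N}. card {U\<in>PU. window_weight N a c n U \<theta> \<le> s})"
    unfolding PU_def by (simp add: card_light_window_profiles[OF N a])
  also have "\<dots> = (\<Sum>U\<in>PU. card {\<theta>\<in>{0..<N}. window_weight N a c n U \<theta> \<le> s})"
    using \<open>finite PU\<close> by (intro sum_card_filter_swap) simp_all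
  also have "\<dots> \<le> (\<Sum>U\<in>PU. nat (N - a))"
    by (intro sum_mono light_rotations)
  also have "\<dots> = nat N ^ n * nat (N - a)"
    by (simp add: PU_def card_PiE)
  finally show ?thesis .
qed

lemma light_prob_of_ratio:
  fixes N a :: int
  assumes N: "N > 0" and a: "0 \<le> a" "a \<le> N"
  shows "light_prob (a / N) c n s
           = real (\<Sum>F\<in>light_sets c n s. nat a ^ card F * nat (N - a) ^ (n - card F)) / N ^ n"
proof -
  have "(a / N) ^ card F * (1 - a / N) ^ (n - card F)
      = real (nat a ^ card F * nat (N - a) ^ (n - card F)) / N ^ n"
    if "F \<in> light_sets c n s" for F
  proof -
    have "card F \<le> n" using that card_mono[of "{..<n}" F] by (simp add: light_sets_def)
    then have "real_of_int N ^ n = N ^ card F * N ^ (n - card F)" by (simp flip: power_add)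
    moreover have "1 - a / N = (N - a) / N" using N by (simp add: field_simps)
    ultimately show ?thesis using a by (simp add: power_divide)
  qed
  then show ?thesis unfolding light_prob_def by (simp add: sum_divide_distrib)
qed

lemma light_prob_le_rational:
  fixes N a :: int and r n :: nat and s :: real
  assumes N: "N > 0" and r: "2 \<le> r"
    and a_lt: "int (r - 1) * a < N" and a_ge: "N \<le> int r * a"
    and c: "\<And>i. 0 \<le> c i" and total: "real r * s < (\<Sum>i<n. c i)"
  shows "light_prob (a / N) c n s \<le> 1 - a / N"
proof -
  have a: "0 \<le> a" "a \<le> N" using window_length_bounds[OF N r a_lt a_ge] by simp_all
  define T where "T = (\<Sum>F\<in>light_sets c n s. nat a ^ card F * nat (N - a) ^ (n - card F))"
  have "real (nat N * T) \<le> real (nat N ^ n * nat (N - a))"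
    unfolding T_def using light_profile_count_le[OF N r a_lt a_ge c total] by (rule of_nat_mono)
  then have "real_of_int N * real T \<le> real_of_int N ^ n * (N - a)" using a by simp
  then have "real T / N ^ n \<le> (N - a) / N" using N by (simp add: field_simps)
  then show ?thesis
    using N by (simp add: light_prob_of_ratio[OF N a] T_def[symmetric] diff_divide_distrib)
qed

lemma light_prob_le:
  fixes q s :: real and r n :: nat
  assumes r: "2 \<le> r" and q_ge: "1 / real r \<le> q" and q_lt: "real (r - 1) * q < 1"
    and c: "\<And>i. 0 \<le> c i" and total: "real r * s < (\<Sum>i<n. c i)"
  shows "light_prob q c n s \<le> 1 - q"
proof -
  define x where "x m = real_of_int \<lceil>q * real m\<rceil> / real m" for m :: nat
  have x_bounds: "q \<le> x m \<and> x m \<le> q + 1 / real m" if "m > 0" for m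
    using that by (simp add: x_def field_simps) linarith
  have "x \<longlonglongrightarrow> q"
  proof (rule tendsto_sandwich[of "\<lambda>_. q" x _ "\<lambda>m. q + 1 / real m"])
    show "(\<lambda>m. q + 1 / real m) \<longlonglongrightarrow> q"
      using tendsto_add[OF tendsto_const lim_inverse_n, of q] by (simp add: inverse_eq_divide)
  qed (use x_bounds in \<open>auto intro!: eventually_sequentiallyI[of 1]\<close>)
  then have "(\<lambda>m. real (r - 1) * x m) \<longlonglongrightarrow> real (r - 1) * q"
    by (intro tendsto_intros)
  then have "\<forall>\<^sub>F m in sequentially. real (r - 1) * x m < 1"
    using q_lt by (rule order_tendstoD)
  then have "\<forall>\<^sub>F m in sequentially. real (r - 1) * x m < 1 \<and> m > 0"
    using eventually_gt_at_top by (rule eventually_conj)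
  then have "\<forall>\<^sub>F m in sequentially. light_prob (x m) c n s \<le> 1 - x m"
  proof (rule eventually_mono, safe)
    fix m :: nat assume x_lt: "real (r - 1) * x m < 1" and "m > 0"
    define a where "a = \<lceil>q * real m\<rceil>"
    have "real (r - 1) * real_of_int a < real m"
      using x_lt \<open>m > 0\<close> by (simp add: x_def a_def field_simps)
    then have a_lt: "int (r - 1) * a < int m"
      by (metis of_int_less_iff of_int_mult of_int_of_nat_eq)
    have "real m \<le> real r * q * real m"
      using q_ge r \<open>m > 0\<close> by (simp add: field_simps)
    also have "\<dots> \<le> real r * real_of_int a" unfolding a_def using r by simp
    finally have a_ge: "int m \<le> int r * a"
      by (metis of_int_le_iff of_int_mult of_int_of_nat_eq)
    have "x m = real_of_int a / real_of_int (int m)" by (simp add: x_def a_def)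
    then show "light_prob (x m) c n s \<le> 1 - x m"
      using light_prob_le_rational[OF _ r a_lt a_ge c total] \<open>m > 0\<close> by simp
  qed
  moreover have "(\<lambda>m. light_prob (x m) c n s) \<longlonglongrightarrow> light_prob q c n s"
    unfolding light_prob_def by (intro tendsto_intros \<open>x \<longlonglongrightarrow> q\<close>)
  ultimately show ?thesis
    using \<open>x \<longlonglongrightarrow> q\<close> by (intro tendsto_le[OF trivial_limit_sequentially]) (auto intro: tendsto_intros)
qed

lemma bern_space_cylinder:
  fixes p :: real and n :: nat and F :: "nat set"
  assumes p: "0 \<le> p" "p \<le> 1" and F: "F \<subseteq> {..<n}"
  shows "{\<omega> \<in> space (bern_space p). {i\<in>{..<n}. \<not> \<omega> i} = F} \<in> sets (bern_space p)"
    and "measure (bern_space p) {\<omega> \<in> space (bern_space p). {i\<in>{..<n}. \<not> \<omega> i} = F}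
           = (1 - p) ^ card F * p ^ (n - card F)"
proof -
  define M where "M = (\<lambda>_::nat. measure_pmf (bernoulli_pmf p))"
  interpret product_prob_space M UNIV unfolding M_def by unfold_locales
  have space: "space (bern_space p) = UNIV"
    by (simp add: bern_space_def space_PiM)
  have "{\<omega> \<in> space (bern_space p). {i\<in>{..<n}. \<not> \<omega> i} = F}
      = prod_emb UNIV M {..<n} (PiE {..<n} (\<lambda>i. {i \<notin> F}))"
  proof (intro equalityI subsetI)
    fix \<omega> assume "\<omega> \<in> {\<omega> \<in> space (bern_space p). {i\<in>{..<n}. \<not> \<omega> i} = F}"
    then show "\<omega> \<in> prod_emb UNIV M {..<n} (PiE {..<n} (\<lambda>i. {i \<notin> F}))"
      by (auto simp: prod_emb_iff M_def)
  next
    fix \<omega> assume "\<omega> \<in> prod_emb UNIV M {..<n} (PiE {..<n} (\<lambda>i. {i \<notin> F}))"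
    then show "\<omega> \<in> {\<omega> \<in> space (bern_space p). {i\<in>{..<n}. \<not> \<omega> i} = F}"
      using F by (auto simp: prod_emb_iff space)
  qed
  moreover have "bern_space p = PiM UNIV M" by (simp add: bern_space_def M_def)
  moreover have "prod_emb UNIV M {..<n} (PiE {..<n} (\<lambda>i. {i \<notin> F})) \<in> sets (PiM UNIV M)"
    by (rule sets_PiM_I) (auto simp: M_def)
  moreover have "measure (PiM UNIV M) (prod_emb UNIV M {..<n} (PiE {..<n} (\<lambda>i. {i \<notin> F})))
      = (\<Prod>i<n. if i \<in> F then 1 - p else p)"
    using p by (subst measure_PiM_emb) (auto simp: M_def measure_pmf_single intro!: prod.cong)
  ultimately show "{\<omega> \<in> space (bern_space p). {i\<in>{..<n}. \<not> \<omega> i} = F} \<in> sets (bern_space p)"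
    and "measure (bern_space p) {\<omega> \<in> space (bern_space p). {i\<in>{..<n}. \<not> \<omega> i} = F}
           = (1 - p) ^ card F * p ^ (n - card F)"
    using F by (simp_all add: prod_if_mem_subset)
qed

lemma bern_space_loss_set_in:
  fixes p :: real and n :: nat and Fam :: "nat set set"
  assumes p: "0 \<le> p" "p \<le> 1" and Fam: "\<And>F. F \<in> Fam \<Longrightarrow> F \<subseteq> {..<n}"
  shows "{\<omega> \<in> space (bern_space p). {i\<in>{..<n}. \<not> \<omega> i} \<in> Fam} \<in> sets (bern_space p)"
    and "measure (bern_space p) {\<omega> \<in> space (bern_space p). {i\<in>{..<n}. \<not> \<omega> i} \<in> Fam}
           = (\<Sum>F\<in>Fam. (1 - p) ^ card F * p ^ (n - card F))"
proof -
  interpret prob_space "bern_space p"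
    unfolding bern_space_def by (rule prob_space_PiM) (rule prob_space_measure_pmf)
  define cyl where "cyl F = {\<omega> \<in> space (bern_space p). {i\<in>{..<n}. \<not> \<omega> i} = F}" for F
  have eq: "{\<omega> \<in> space (bern_space p). {i\<in>{..<n}. \<not> \<omega> i} \<in> Fam} = (\<Union>F\<in>Fam. cyl F)"
    by (auto simp: cyl_def)
  have "Fam \<subseteq> Pow {..<n}" using Fam by blast
  then have "finite Fam" by (rule finite_subset) simp
  moreover have cyl_sets: "cyl F \<in> sets (bern_space p)" if "F \<in> Fam" for F
    using bern_space_cylinder(1)[OF p Fam[OF that]] by (simp add: cyl_def)
  ultimately show "{\<omega> \<in> space (bern_space p). {i\<in>{..<n}. \<not> \<omega> i} \<in> Fam} \<in> sets (bern_space p)"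
    unfolding eq by (rule sets.finite_UN)
  have "disjoint_family_on cyl Fam" unfolding disjoint_family_on_def cyl_def by blast
  with \<open>finite Fam\<close> cyl_sets
  have "measure (bern_space p) (\<Union>F\<in>Fam. cyl F) = (\<Sum>F\<in>Fam. measure (bern_space p) (cyl F))"
    by (intro finite_measure_finite_Union) blast+
  also have "\<dots> = (\<Sum>F\<in>Fam. (1 - p) ^ card F * p ^ (n - card F))"
    using bern_space_cylinder(2)[OF p Fam] by (simp add: cyl_def)
  finally show "measure (bern_space p) {\<omega> \<in> space (bern_space p). {i\<in>{..<n}. \<not> \<omega> i} \<in> Fam}
      = (\<Sum>F\<in>Fam. (1 - p) ^ card F * p ^ (n - card F))"
    unfolding eq .
qed

lemma stake_sum_add_losses_le:
  assumes "stake_seq c"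
  shows "stake_sum c \<omega> + sum c {i\<in>{..<n}. \<not> \<omega> i} \<le> 1"
proof -
  have c: "\<And>i. 0 \<le> c i" "c sums 1" using assms by (auto simp: stake_seq_def)
  define won where "won i = c i * (if \<omega> i then 1 else 0)" for i
  define lost where "lost i = (if i \<in> {i\<in>{..<n}. \<not> \<omega> i} then c i else 0)" for i
  have "lost sums sum c {i\<in>{..<n}. \<not> \<omega> i}"
    unfolding lost_def by (rule sums_If_finite_set) simp
  moreover have "summable won"
    using c(1) by (intro summable_comparison_test[OF _ sums_summable[OF c(2)]]) (simp add: won_def)
  ultimately have won_lost: "(\<lambda>i. won i + lost i) sums (stake_sum c \<omega> + sum c {i\<in>{..<n}. \<not> \<omega> i})"
    by (simp add: stake_sum_def won_def[symmetric] summable_sums sums_add)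
  have "won i + lost i \<le> c i" for i
    using c(1)[of i] by (simp add: won_def lost_def)
  from this won_lost c(2) show ?thesis by (rule sums_le)
qed

lemma success_prob_le_light_prob:
  assumes p: "0 \<le> p" "p \<le> 1" and c: "stake_seq c"
  shows "success_prob p c t \<le> light_prob (1 - p) c n (1 - t)"
proof -
  interpret prob_space "bern_space p"
    unfolding bern_space_def by (rule prob_space_PiM) (rule prob_space_measure_pmf)
  have Fam: "\<And>F. F \<in> light_sets c n (1 - t) \<Longrightarrow> F \<subseteq> {..<n}" by (simp add: light_sets_def)
  have "{\<omega> \<in> space (bern_space p). t \<le> stake_sum c \<omega>}
      \<subseteq> {\<omega> \<in> space (bern_space p). {i\<in>{..<n}. \<not> \<omega> i} \<in> light_sets c n (1 - t)}"
  proof safe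
    fix \<omega> assume "t \<le> stake_sum c \<omega>"
    then have "sum c {i\<in>{..<n}. \<not> \<omega> i} \<le> 1 - t"
      using stake_sum_add_losses_le[OF c, of \<omega> n] by linarith
    then show "{i\<in>{..<n}. \<not> \<omega> i} \<in> light_sets c n (1 - t)" by (auto simp: light_sets_def)
  qed
  then have "success_prob p c t \<le> measure (bern_space p)
      {\<omega> \<in> space (bern_space p). {i\<in>{..<n}. \<not> \<omega> i} \<in> light_sets c n (1 - t)}"
    unfolding success_prob_def
    by (rule finite_measure_mono) (rule bern_space_loss_set_in(1)[OF p Fam])
  also have "\<dots> = light_prob (1 - p) c n (1 - t)"
    unfolding light_prob_def using bern_space_loss_set_in(2)[OF p Fam] by simp
  finally show ?thesis .
qed

lemma success_prob_le:
  fixes p t :: real and r :: nat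
  assumes r: "2 \<le> r" and p_ge: "1 / real r \<le> 1 - p" and p_lt: "real (r - 1) * (1 - p) < 1"
    and t: "real r * (1 - t) < 1" and c: "stake_seq c"
  shows "success_prob p c t \<le> p"
proof -
  have "0 < 1 / real r" using r by simp
  then have "0 < 1 - p" using p_ge by linarith
  moreover have "1 \<le> real (r - 1)" using r by simp
  ultimately have "1 - p \<le> real (r - 1) * (1 - p)" by simp
  then have p: "0 \<le> p" "p \<le> 1" using p_lt \<open>0 < 1 - p\<close> by linarith+
  have "(\<lambda>n. \<Sum>i<n. c i) \<longlonglongrightarrow> 1" using c by (simp add: stake_seq_def sums_def)
  then have "\<forall>\<^sub>F n in sequentially. real r * (1 - t) < (\<Sum>i<n. c i)" using t by (rule order_tendstoD)
  then obtain n where total: "real r * (1 - t) < (\<Sum>i<n. c i)"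
    by (auto simp: eventually_sequentially)
  have "success_prob p c t \<le> light_prob (1 - p) c n (1 - t)"
    by (rule success_prob_le_light_prob[OF p c])
  also have "\<dots> \<le> 1 - (1 - p)"
    using c by (intro light_prob_le[OF r p_ge p_lt _ total]) (simp add: stake_seq_def)
  finally show ?thesis by simp
qed

lemma bold_play_eq:
  fixes t :: real
  assumes "1 / 2 < t" "t \<le> 1"
  shows "bold_play t = (\<lambda>i. if i = 0 then 1 else 0)"
proof -
  have "\<lfloor>1 / t\<rfloor> = 1" using assms by (simp add: floor_eq_iff field_simps)
  then show ?thesis by (auto simp: bold_play_def fun_eq_iff)
qed

lemma stake_seq_first_only: "stake_seq (\<lambda>i. if i = 0 then 1 else 0)"
  using sums_single[of 0 "\<lambda>_. 1 :: real"] by (simp add: stake_seq_def)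

lemma success_prob_first_only:
  fixes p t :: real
  assumes p: "0 \<le> p" "p \<le> 1" and t: "0 < t" "t \<le> 1"
  shows "success_prob p (\<lambda>i. if i = 0 then 1 else 0) t = p"
proof -
  have "stake_sum (\<lambda>i. if i = 0 then 1 else 0) \<omega> = (if \<omega> 0 then 1 else 0)" for \<omega>
    unfolding stake_sum_def by (subst suminf_finite[of "{0}"]) auto
  then have "{\<omega> \<in> space (bern_space p). t \<le> stake_sum (\<lambda>i. if i = 0 then 1 else 0) \<omega>}
      = {\<omega> \<in> space (bern_space p). {i\<in>{..<1}. \<not> \<omega> i} = {}}"
    using t by (auto intro!: gr0I)
  then show ?thesis
    using bern_space_cylinder(2)[OF p, of "{}" 1] by (simp add: success_prob_def)
qed

lemma opt_prob_eqI:
  assumes "stake_seq c\<^sub>0" "success_prob p c\<^sub>0 t = v"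
    and "\<And>c. stake_seq c \<Longrightarrow> success_prob p c t \<le> v"
  shows "opt_prob p t = v"
proof (rule antisym)
  show "opt_prob p t \<le> v" unfolding opt_prob_def by (rule cSUP_least) (use assms in auto)
  have "bdd_above ((\<lambda>c. success_prob p c t) ` {c. stake_seq c})"
    using assms(3) by (intro bdd_aboveI) auto
  then show "v \<le> opt_prob p t"
    unfolding opt_prob_def by (rule cSUP_upper2[of _ _ c\<^sub>0]) (use assms in auto)
qed

theorem theorem12:
  fixes k :: nat and p t :: real
  assumes "k \<ge> 1"
    and "real k / real (k + 1) < p" and "p \<le> real (k + 1) / real (k + 2)"
    and "real (k + 1) / real (k + 2) < t" and "t \<le> 1"
  shows "opt_prob p t = p \<and> success_prob p (bold_play t) t = opt_prob p t"
proof -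
  have p_ge: "1 / real (k + 2) \<le> 1 - p" and p_lt: "real (k + 2 - 1) * (1 - p) < 1"
    using assms(2,3) by (simp_all add: field_simps)
  have t_lt: "real (k + 2) * (1 - t) < 1"
    using assms(4) by (simp add: field_simps)
  have "1 / 2 \<le> real (k + 1) / real (k + 2)" by (simp add: field_simps)
  then have t_gt: "1 / 2 < t" using assms(4) by linarith
  have "0 \<le> real k / real (k + 1)" "real (k + 1) / real (k + 2) \<le> 1" by simp_all
  then have p: "0 \<le> p" "p \<le> 1" using assms(2,3) by linarith+
  have bold: "bold_play t = (\<lambda>i. if i = 0 then 1 else 0)"
    using t_gt assms(5) by (rule bold_play_eq)
  have first: "success_prob p (\<lambda>i. if i = 0 then 1 else 0) t = p"
    using p t_gt assms(5) by (intro success_prob_first_only) simp_all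
  have "success_prob p c t \<le> p" if "stake_seq c" for c
    using success_prob_le[OF _ p_ge p_lt t_lt that] by simp
  then have "opt_prob p t = p" by (rule opt_prob_eqI[OF stake_seq_first_only first])
  then show ?thesis using first by (simp add: bold)
qed

end
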